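(* For every integer $t$, there exists a connected non-bipartite graph whose adjacency matrix has exactly four distinct eigenvalues and which has at least $t$ distinct valencies.
   Context: Graphs are finite, simple and undirected; eigenvalues of a graph are those of its adjacency matrix; valencies are vertex degrees. *)

theory Defs
  imports "Jordan_Normal_Form.Char_Poly"
begin

text \<open>A finite simple graph on the vertex set {0..<n}, given by an edge relation E
  (only its restriction to {0..<n} matters).\<close>

definition simple_graph :: "nat \<Rightarrow> (nat \<Rightarrow> nat \<Rightarrow> bool) \<Rightarrow> bool" where
  "simple_graph n E \<longleftrightarrow> (\<forall>u<n. \<forall>v<n. E u v \<longleftrightarrow> E v u) \<and> (\<forall>u<n. \<not> E u u)"

definition adj_matrix :: "nat \<Rightarrow> (nat \<Rightarrow> nat \<Rightarrow> bool) \<Rightarrow> real mat" where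
  "adj_matrix n E = mat n n (\<lambda>(i, j). if E i j then 1 else 0)"

definition graph_eigenvalues :: "nat \<Rightarrow> (nat \<Rightarrow> nat \<Rightarrow> bool) \<Rightarrow> real set" where
  "graph_eigenvalues n E = {k. eigenvalue (adj_matrix n E) k}"

definition connected_graph :: "nat \<Rightarrow> (nat \<Rightarrow> nat \<Rightarrow> bool) \<Rightarrow> bool" where
  "connected_graph n E \<longleftrightarrow> n \<ge> 1 \<and>
     (\<forall>u<n. \<forall>v<n. (\<lambda>x y. x < n \<and> y < n \<and> E x y)\<^sup>*\<^sup>* u v)"

definition bipartite_graph :: "nat \<Rightarrow> (nat \<Rightarrow> nat \<Rightarrow> bool) \<Rightarrow> bool" where
  "bipartite_graph n E \<longleftrightarrow> (\<exists>c :: nat \<Rightarrow> bool. \<forall>u<n. \<forall>v<n. E u v \<longrightarrow> c u \<noteq> c v)"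

definition valency :: "nat \<Rightarrow> (nat \<Rightarrow> nat \<Rightarrow> bool) \<Rightarrow> nat \<Rightarrow> nat" where
  "valency n E v = card {u. u < n \<and> E v u}"

definition valencies :: "nat \<Rightarrow> (nat \<Rightarrow> nat \<Rightarrow> bool) \<Rightarrow> nat set" where
  "valencies n E = valency n E ` {0..<n}"

end

theory Submission
  imports Defs
begin

text \<open>Take a design on \<open>v\<close> points in which every point lies in \<open>\<beta>\<^sup>2\<close> blocks and every two
  points lie in \<open>\<beta>\<close> blocks, and form the graph whose points are a clique \<open>K\<^sub>v\<close> and whose blocks
  are further vertices joined to their points. For an eigenvector with eigenvalue \<open>k \<noteq> 0\<close> the block
  entries are determined by the point entries \<open>x\<close>, which satisfy
  \<open>(k + \<beta>)(k - \<beta> + 1) x\<^sub>p = (k + \<beta>) \<Sum>x\<close> for every point \<open>p\<close>. Hence either \<open>k \<in> {-\<beta>, \<beta> - 1}\<close>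
  (with \<open>\<Sum>x = 0\<close>) or \<open>x\<close> is constant and \<open>k = \<beta> - 1 + v\<close>; a repeated block gives the eigenvalue 0.
  The graph contains triangles, so it is not bipartite, and a block vertex has valency equal to the
  size of its block. All nonempty subsets of a \<open>v\<close>-set together with \<open>\<beta>(\<beta> - 2)\<close> copies of every
  singleton, \<open>\<beta> = 2\<^sup>v\<^sup>-\<^sup>2\<close>, form such a design with block sizes \<open>1, \<dots>, v\<close>.\<close>

lemma adj_matrix_mult_vec_nth:
  assumes "i < n"
  shows "(adj_matrix n E *\<^sub>v vec n w) $ i = (\<Sum>j | j < n \<and> E i j. w j)"
proof -
  have "(adj_matrix n E *\<^sub>v vec n w) $ i = (\<Sum>j\<in>{0..<n}. (if E i j then 1 else 0) * w j)"
    using assms by (simp add: adj_matrix_def scalar_prod_def row_def)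
  also have "\<dots> = (\<Sum>j\<in>{0..<n}. if E i j then w j else 0)"
    by (intro sum.cong) auto
  also have "\<dots> = (\<Sum>j | j < n \<and> E i j. w j)"
    by (simp add: sum.If_cases atLeast0LessThan Collect_conj_eq lessThan_def Int_commute)
  finally show ?thesis .
qed

lemma eigenvalue_adj_matrix_iff:
  "eigenvalue (adj_matrix n E) k \<longleftrightarrow>
   (\<exists>w. (\<exists>i<n. w i \<noteq> 0) \<and> (\<forall>i<n. (\<Sum>j | j < n \<and> E i j. w j) = k * w i))"
proof
  assume "eigenvalue (adj_matrix n E) k"
  then obtain u where u: "u \<in> carrier_vec n" "u \<noteq> 0\<^sub>v n" "adj_matrix n E *\<^sub>v u = k \<cdot>\<^sub>v u"
    unfolding eigenvalue_def eigenvector_def by (auto simp: adj_matrix_def)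
  define w where "w i = u $ i" for i
  have u_eq: "u = vec n w"
    using u(1) unfolding w_def by auto
  have "\<exists>i<n. w i \<noteq> 0"
    using u(1,2) unfolding w_def by (metis eq_vecI carrier_vecD index_zero_vec)
  moreover have "(\<Sum>j | j < n \<and> E i j. w j) = k * w i" if "i < n" for i
    using arg_cong[OF u(3), of "\<lambda>x. x $ i"] adj_matrix_mult_vec_nth[OF that, of E w] that u_eq
    by simp
  ultimately show "\<exists>w. (\<exists>i<n. w i \<noteq> 0) \<and> (\<forall>i<n. (\<Sum>j | j < n \<and> E i j. w j) = k * w i)"
    by blast
next
  assume "\<exists>w. (\<exists>i<n. w i \<noteq> 0) \<and> (\<forall>i<n. (\<Sum>j | j < n \<and> E i j. w j) = k * w i)"
  then obtain w where w: "\<exists>i<n. w i \<noteq> 0" "\<forall>i<n. (\<Sum>j | j < n \<and> E i j. w j) = k * w i"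
    by blast
  have "vec n w \<noteq> 0\<^sub>v n"
    using w(1) by (metis index_vec index_zero_vec(1))
  moreover have "adj_matrix n E *\<^sub>v vec n w = k \<cdot>\<^sub>v vec n w"
    by (rule eq_vecI) (use w(2) adj_matrix_mult_vec_nth in \<open>auto simp: adj_matrix_def\<close>)
  ultimately have "eigenvector (adj_matrix n E) (vec n w) k"
    unfolding eigenvector_def by (simp add: adj_matrix_def)
  then show "eigenvalue (adj_matrix n E) k"
    unfolding eigenvalue_def by blast
qed

text \<open>Vertices below \<open>v\<close> are the points, forming a clique; vertex \<open>v + b\<close> is the block \<open>F b\<close>.\<close>

definition clique_block_graph :: "nat \<Rightarrow> (nat \<Rightarrow> nat set) \<Rightarrow> nat \<Rightarrow> nat \<Rightarrow> bool" where
  "clique_block_graph v F x y =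
     (if x < v then (if y < v then x \<noteq> y else x \<in> F (y - v)) else y < v \<and> y \<in> F (x - v))"

locale clique_design =
  fixes v m :: nat and F :: "nat \<Rightarrow> nat set" and \<beta> :: nat
  assumes points_ge_3: "v \<ge> 3"
    and index_ge_2: "\<beta> \<ge> 2"
    and block_subset: "\<And>b. b < m \<Longrightarrow> F b \<subseteq> {..<v}"
    and block_nonempty: "\<And>b. b < m \<Longrightarrow> F b \<noteq> {}"
    and card_blocks_through: "\<And>p q. p < v \<Longrightarrow> q < v \<Longrightarrow>
        card {b. b < m \<and> p \<in> F b \<and> q \<in> F b} = (if p = q then \<beta>^2 else \<beta>)"
    and repeated_block: "\<exists>b1<m. \<exists>b2<m. b1 \<noteq> b2 \<and> F b1 = F b2"
begin

abbreviation "E \<equiv> clique_block_graph v F"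
abbreviation "n \<equiv> v + m"

lemma vertex_cases:
  assumes "i < n"
  obtains (point) "i < v" | (block) b where "b < m" "i = v + b"
  using assms by (metis add_diff_inverse_nat add_less_cancel_left not_less)

lemma neighbours_point:
  assumes "p < v"
  shows "{j. j < n \<and> E p j} = ({..<v} - {p}) \<union> (+) v ` {b. b < m \<and> p \<in> F b}"
proof (rule Set.set_eqI)
  fix j
  show "j \<in> {j. j < n \<and> E p j} \<longleftrightarrow> j \<in> ({..<v} - {p}) \<union> (+) v ` {b. b < m \<and> p \<in> F b}"
    using assms by (cases "j < v") (auto simp: clique_block_graph_def image_iff intro!: exI[of _ "j - v"])
qed

lemma neighbours_block: "b < m \<Longrightarrow> {j. j < n \<and> E (v + b) j} = F b"
  using block_subset[of b] by (auto simp: clique_block_graph_def)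

lemma sum_neighbours_point:
  fixes w :: "nat \<Rightarrow> 'a::ab_group_add"
  assumes "p < v"
  shows "(\<Sum>j | j < n \<and> E p j. w j) = (\<Sum>q<v. w q) - w p + (\<Sum>b | b < m \<and> p \<in> F b. w (v + b))"
proof -
  have "(\<Sum>j | j < n \<and> E p j. w j) =
      (\<Sum>q\<in>{..<v} - {p}. w q) + (\<Sum>j\<in>(+) v ` {b. b < m \<and> p \<in> F b}. w j)"
    unfolding neighbours_point[OF assms] by (rule sum.union_disjoint) auto
  also have "(\<Sum>j\<in>(+) v ` {b. b < m \<and> p \<in> F b}. w j) = (\<Sum>b | b < m \<and> p \<in> F b. w (v + b))"
    by (simp add: sum.reindex)
  finally show ?thesis
    using assms by (simp add: sum_diff1)
qed

lemma eigen_equations_iff: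
  fixes w :: "nat \<Rightarrow> real"
  shows "(\<forall>i<n. (\<Sum>j | j < n \<and> E i j. w j) = k * w i) \<longleftrightarrow>
    (\<forall>p<v. (\<Sum>q<v. w q) - w p + (\<Sum>b | b < m \<and> p \<in> F b. w (v + b)) = k * w p) \<and>
    (\<forall>b<m. (\<Sum>q\<in>F b. w q) = k * w (v + b))"
proof -
  have "(\<forall>i<n. P i) \<longleftrightarrow> (\<forall>p<v. P p) \<and> (\<forall>b<m. P (v + b))" for P
    by (metis add_diff_inverse_nat add_less_cancel_left trans_less_add1)
  then show ?thesis
    by (simp add: sum_neighbours_point neighbours_block)
qed

text \<open>This is the identity \<open>N N\<^sup>T = (\<beta>\<^sup>2 - \<beta>) I + \<beta> J\<close> for the point-block incidence matrix \<open>N\<close>.\<close>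

lemma sum_blocks_through_point:
  assumes p: "p < v"
  shows "(\<Sum>b | b < m \<and> p \<in> F b. \<Sum>q\<in>F b. x q) = (real \<beta>^2 - real \<beta>) * x p + real \<beta> * (\<Sum>q<v. x q)"
proof -
  have "(\<Sum>b | b < m \<and> p \<in> F b. \<Sum>q\<in>F b. x q) =
      (\<Sum>b | b < m \<and> p \<in> F b. \<Sum>q<v. if q \<in> F b then x q else 0)"
  proof (rule sum.cong[OF refl])
    fix b
    assume "b \<in> {b. b < m \<and> p \<in> F b}"
    then have "{..<v} \<inter> F b = F b"
      using block_subset by blast
    then show "(\<Sum>q\<in>F b. x q) = (\<Sum>q<v. if q \<in> F b then x q else 0)"
      by (simp flip: sum.inter_restrict[OF finite_lessThan])
  qed
  also have "\<dots> = (\<Sum>q<v. \<Sum>b | b < m \<and> p \<in> F b. if q \<in> F b then x q else 0)"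
    by (rule sum.swap)
  also have "\<dots> = (\<Sum>q<v. real (card {b. b < m \<and> p \<in> F b \<and> q \<in> F b}) * x q)"
    by (intro sum.cong refl) (simp add: sum.If_cases Int_def conj_assoc)
  also have "\<dots> = (\<Sum>q<v. real \<beta> * x q + (if q = p then (real \<beta>^2 - real \<beta>) * x q else 0))"
    using p by (intro sum.cong refl) (auto simp: card_blocks_through algebra_simps)
  also have "\<dots> = (real \<beta>^2 - real \<beta>) * x p + real \<beta> * (\<Sum>q<v. x q)"
    using p by (simp add: sum.distrib sum_distrib_left)
  finally show ?thesis .
qed

lemma point_equation:
  fixes w :: "nat \<Rightarrow> real"
  assumes eigen: "\<forall>i<n. (\<Sum>j | j < n \<and> E i j. w j) = k * w i"
    and k: "k \<noteq> 0" and p: "p < v"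
  shows "(k + real \<beta>) * (k - real \<beta> + 1) * w p = (k + real \<beta>) * (\<Sum>q<v. w q)"
proof -
  note eqs = eigen[unfolded eigen_equations_iff]
  have "(\<Sum>b | b < m \<and> p \<in> F b. w (v + b)) = (\<Sum>b | b < m \<and> p \<in> F b. (\<Sum>q\<in>F b. w q) / k)"
    using eqs k by (intro sum.cong refl) (simp add: field_simps)
  also have "\<dots> = ((real \<beta>^2 - real \<beta>) * w p + real \<beta> * (\<Sum>q<v. w q)) / k"
    by (simp add: sum_blocks_through_point[OF p] flip: sum_divide_distrib)
  finally have block_sum: "(\<Sum>b | b < m \<and> p \<in> F b. w (v + b)) =
    ((real \<beta>^2 - real \<beta>) * w p + real \<beta> * (\<Sum>q<v. w q)) / k" .
  have "(\<Sum>q<v. w q) - w p + (\<Sum>b | b < m \<and> p \<in> F b. w (v + b)) = k * w p"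
    using eqs p by auto
  then have "(\<Sum>q<v. w q) - w p + ((real \<beta>^2 - real \<beta>) * w p + real \<beta> * (\<Sum>q<v. w q)) / k = k * w p"
    by (simp only: block_sum)
  then have "k * ((\<Sum>q<v. w q) - w p) + ((real \<beta>^2 - real \<beta>) * w p + real \<beta> * (\<Sum>q<v. w q)) = k * (k * w p)"
    using k by (simp add: field_simps)
  then show ?thesis
    by (simp add: algebra_simps power2_eq_square)
qed

lemma eigenvalue_cases:
  assumes "eigenvalue (adj_matrix n E) k"
  shows "k \<in> {0, - real \<beta>, real \<beta> - 1, real \<beta> - 1 + real v}"
proof (rule ccontr)
  assume k: "k \<notin> {0, - real \<beta>, real \<beta> - 1, real \<beta> - 1 + real v}"
  from assms obtain w where nonzero: "\<exists>i<n. w i \<noteq> 0"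
    and eigen: "\<forall>i<n. (\<Sum>j | j < n \<and> E i j. w j) = k * w i"
    unfolding eigenvalue_adj_matrix_iff by blast
  define S where "S = (\<Sum>q<v. w q)"
  define c where "c = k - real \<beta> + 1"
  have c: "c \<noteq> 0" "c \<noteq> real v"
    using k by (auto simp: c_def)
  have w_point: "w p = S / c" if "p < v" for p
  proof -
    have "(k + real \<beta>) * (c * w p) = (k + real \<beta>) * S"
      using point_equation[OF eigen _ that] k by (simp add: S_def c_def mult.assoc)
    then have "c * w p = S"
      using k by (simp add: add_eq_0_iff)
    then show ?thesis
      using c by (simp add: field_simps)
  qed
  have "(\<Sum>q<v. w q) = (\<Sum>q<v. S / c)"
    by (rule sum.cong) (simp_all add: w_point)
  then have "S = real v * (S / c)"
    by (simp add: flip: S_def)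
  then have "S * c = S * real v"
    using c by (simp add: field_simps)
  then have "S = 0"
    using c by simp
  then have points: "w p = 0" if "p < v" for p
    using w_point that by simp
  have blocks: "w (v + b) = 0" if "b < m" for b
  proof -
    have "k * w (v + b) = (\<Sum>q\<in>F b. w q)"
      using eigen[unfolded eigen_equations_iff] that by simp
    also have "\<dots> = 0"
      using block_subset[OF that] points by (intro sum.neutral) auto
    finally show ?thesis
      using k by simp
  qed
  have "w i = 0" if "i < n" for i
    using that by (cases rule: vertex_cases) (auto simp: points blocks)
  with nonzero show False
    by blast
qed

lemma eigenvalue_from_points:
  fixes x :: "nat \<Rightarrow> real"
  assumes k: "k \<noteq> 0" and nonzero: "\<exists>p<v. x p \<noteq> 0"
    and reduced: "\<And>p. p < v \<Longrightarrow>
      (\<Sum>q<v. x q) - x p + ((real \<beta>^2 - real \<beta>) * x p + real \<beta> * (\<Sum>q<v. x q)) / k = k * x p"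
  shows "eigenvalue (adj_matrix n E) k"
proof -
  define w where "w i = (if i < v then x i else (\<Sum>q\<in>F (i - v). x q) / k)" for i
  have w_point: "w p = x p" if "p < v" for p
    using that by (simp add: w_def)
  have w_block: "w (v + b) = (\<Sum>q\<in>F b. x q) / k" for b
    by (simp add: w_def)
  have sum_points: "(\<Sum>q<v. w q) = (\<Sum>q<v. x q)"
    by (intro sum.cong) (auto simp: w_point)
  have "(\<Sum>q<v. w q) - w p + (\<Sum>b | b < m \<and> p \<in> F b. w (v + b)) = k * w p" if p: "p < v" for p
  proof -
    have "(\<Sum>b | b < m \<and> p \<in> F b. w (v + b)) = (\<Sum>b | b < m \<and> p \<in> F b. \<Sum>q\<in>F b. x q) / k"
      by (simp only: w_block sum_divide_distrib)
    then show ?thesis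
      using reduced[OF p] by (simp only: sum_blocks_through_point[OF p] sum_points w_point[OF p])
  qed
  moreover have "(\<Sum>q\<in>F b. w q) = k * w (v + b)" if "b < m" for b
    using k block_subset[OF that] by (simp add: w_block w_point subset_eq)
  moreover have "\<exists>i<n. w i \<noteq> 0"
    using nonzero w_point by (metis trans_less_add1)
  ultimately show ?thesis
    unfolding eigenvalue_adj_matrix_iff eigen_equations_iff by blast
qed

lemma eigenvalue_zero: "eigenvalue (adj_matrix n E) 0"
proof -
  obtain b1 b2 where b: "b1 < m" "b2 < m" "b1 \<noteq> b2" "F b1 = F b2"
    using repeated_block by blast
  define w :: "nat \<Rightarrow> real" where
    "w i = (if i = v + b1 then 1 else 0) - (if i = v + b2 then 1 else 0)" for i
  have w_point: "w p = 0" if "p < v" for p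
    using that by (simp add: w_def)
  have "(\<Sum>b | b < m \<and> p \<in> F b. w (v + b)) = 0" for p
    using b by (simp add: w_def sum_subtractf sum.delta)
  moreover have "(\<Sum>q\<in>F b. w q) = 0" if "b < m" for b
    using block_subset[OF that] w_point by (intro sum.neutral) auto
  moreover have "\<exists>i<n. w i \<noteq> 0"
    using b by (intro exI[of _ "v + b1"]) (simp add: w_def)
  ultimately show ?thesis
    unfolding eigenvalue_adj_matrix_iff eigen_equations_iff using w_point by auto
qed

lemma eigenvalue_index:
  assumes k: "k = - real \<beta> \<or> k = real \<beta> - 1"
  shows "eigenvalue (adj_matrix n E) k"
proof -
  define x :: "nat \<Rightarrow> real" where "x q = (if q = 0 then 1 else 0) - (if q = 1 then 1 else 0)" for q
  have sum_x: "(\<Sum>q<v. x q) = 0"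
    using points_ge_3 by (simp add: x_def sum_subtractf sum.delta)
  have k0: "k \<noteq> 0"
    using k index_ge_2 by auto
  have quadratic: "k * k + k = real \<beta>^2 - real \<beta>"
    using k by (elim disjE; simp add: power2_eq_square left_diff_distrib right_diff_distrib)
  show ?thesis
  proof (rule eigenvalue_from_points[OF k0])
    show "\<exists>p<v. x p \<noteq> 0"
      using points_ge_3 by (intro exI[of _ 0]) (auto simp: x_def)
  next
    fix p
    have "(real \<beta>^2 - real \<beta>) * x p / k = (k + 1) * x p"
      using k0 by (simp flip: quadratic add: field_simps)
    then show "(\<Sum>q<v. x q) - x p + ((real \<beta>^2 - real \<beta>) * x p + real \<beta> * (\<Sum>q<v. x q)) / k = k * x p"
      by (simp add: sum_x algebra_simps)
  qed
qed

lemma eigenvalue_largest: "eigenvalue (adj_matrix n E) (real \<beta> - 1 + real v)"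
proof (rule eigenvalue_from_points[where x = "\<lambda>_. 1"])
  show k0: "real \<beta> - 1 + real v \<noteq> 0"
    using points_ge_3 index_ge_2 by simp
  show "\<exists>p<v. (1::real) \<noteq> 0"
    using points_ge_3 by (intro exI[of _ 0]) simp
  have "real v - 1 + (real \<beta>^2 - real \<beta> + real \<beta> * real v) / (real \<beta> - 1 + real v) =
      real \<beta> - 1 + real v"
    using k0 by (simp add: field_simps) (simp add: algebra_simps power2_eq_square)
  then show "(\<Sum>q<v. (1::real)) - 1 + ((real \<beta>^2 - real \<beta>) * 1 + real \<beta> * (\<Sum>q<v. 1)) /
      (real \<beta> - 1 + real v) = (real \<beta> - 1 + real v) * 1" for p
    by simp
qed

lemma card_graph_eigenvalues: "card (graph_eigenvalues n E) = 4"
proof -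
  have "graph_eigenvalues n E = {0, - real \<beta>, real \<beta> - 1, real \<beta> - 1 + real v}"
    unfolding graph_eigenvalues_def
    using eigenvalue_cases eigenvalue_zero eigenvalue_index eigenvalue_largest by auto
  then show ?thesis
    using index_ge_2 points_ge_3 by auto
qed

lemma simple: "simple_graph n E"
  unfolding simple_graph_def clique_block_graph_def by auto

lemma not_bipartite: "\<not> bipartite_graph n E"
proof
  assume "bipartite_graph n E"
  then obtain c :: "nat \<Rightarrow> bool" where "\<forall>x<n. \<forall>y<n. E x y \<longrightarrow> c x \<noteq> c y"
    unfolding bipartite_graph_def by blast
  then have "c 0 \<noteq> c 1" "c 1 \<noteq> c 2" "c 0 \<noteq> c 2"
    using points_ge_3 by (auto simp: clique_block_graph_def)
  then show False
    by auto
qed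

lemma connected: "connected_graph n E"
proof -
  define R where "R x y \<longleftrightarrow> x < n \<and> y < n \<and> E x y" for x y
  have point: "R\<^sup>*\<^sup>* p 0 \<and> R\<^sup>*\<^sup>* 0 p" if "p < v" for p
    using that points_ge_3
    by (cases "p = 0") (auto simp: R_def clique_block_graph_def intro: r_into_rtranclp)
  have "R\<^sup>*\<^sup>* u 0 \<and> R\<^sup>*\<^sup>* 0 u" if "u < n" for u
    using that
  proof (cases rule: vertex_cases)
    case (block b)
    then obtain p where p: "p \<in> F b" "p < v"
      using block_nonempty block_subset by blast
    then have "R u p" "R p u"
      using block by (auto simp: R_def clique_block_graph_def)
    with point[OF p(2)] show ?thesis
      by (meson converse_rtranclp_into_rtranclp rtranclp.rtrancl_into_rtrancl)
  qed (use point in blast)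
  then show ?thesis
    unfolding connected_graph_def using points_ge_3
    by (auto simp: R_def[abs_def] intro: rtranclp_trans)
qed

lemma block_sizes_subset_valencies: "(\<lambda>b. card (F b)) ` {..<m} \<subseteq> valencies n E"
proof
  fix x
  assume "x \<in> (\<lambda>b. card (F b)) ` {..<m}"
  then obtain b where b: "b < m" "x = card (F b)"
    by auto
  then have "valency n E (v + b) = x"
    by (simp add: valency_def neighbours_block)
  then show "x \<in> valencies n E"
    unfolding valencies_def using b(1) by force
qed

end

lemma card_supsets:
  assumes "finite X" "P \<subseteq> X"
  shows "card {B. B \<subseteq> X \<and> P \<subseteq> B} = 2 ^ (card X - card P)"
proof -
  have "bij_betw (\<lambda>C. C \<union> P) (Pow (X - P)) {B. B \<subseteq> X \<and> P \<subseteq> B}"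
    by (rule bij_betw_byWitness[where f' = "\<lambda>B. B - P"]) (use assms in auto)
  then have "card {B. B \<subseteq> X \<and> P \<subseteq> B} = card (Pow (X - P))"
    by (simp add: bij_betw_same_card)
  also have "\<dots> = 2 ^ (card X - card P)"
    using assms by (simp add: card_Pow card_Diff_subset finite_subset)
  finally show ?thesis .
qed

lemma card_enumerated_supsets:
  assumes g: "bij_betw g I {B. B \<subseteq> X \<and> B \<noteq> {}}" and "finite X" "P \<subseteq> X" "P \<noteq> {}"
  shows "card {i \<in> I. P \<subseteq> g i} = 2 ^ (card X - card P)"
proof -
  have image: "g ` I = {B. B \<subseteq> X \<and> B \<noteq> {}}"
    using g by (rule bij_betw_imp_surj_on)
  have "g ` {i \<in> I. P \<subseteq> g i} = {B. B \<subseteq> X \<and> P \<subseteq> B}"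
  proof (intro equalityI subsetI)
    fix B
    assume "B \<in> {B. B \<subseteq> X \<and> P \<subseteq> B}"
    then have "B \<in> g ` I" "P \<subseteq> B"
      using image assms(4) by auto
    then show "B \<in> g ` {i \<in> I. P \<subseteq> g i}"
      by blast
  qed (use image in blast)
  then have "bij_betw g {i \<in> I. P \<subseteq> g i} {B. B \<subseteq> X \<and> P \<subseteq> B}"
    by (intro bij_betw_subset[OF g]) auto
  then show ?thesis
    using card_supsets[OF assms(2,3)] by (simp add: bij_betw_same_card)
qed

lemma card_div_eq:
  fixes s :: nat
  assumes "0 < s" "p < v"
  shows "card {i. i < s * v \<and> i div s = p} = s"
proof -
  have div_eq: "i div s = p \<longleftrightarrow> p * s \<le> i \<and> i < Suc p * s" for i
  proof -
    have "i div s = p \<longleftrightarrow> p \<le> i div s \<and> i div s < Suc p"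
      by linarith
    then show ?thesis
      using assms(1) by (simp add: less_eq_div_iff_mult_less_eq div_less_iff_less_mult)
  qed
  have "Suc p * s \<le> s * v"
    using assms(2) by (metis Suc_leI mult.commute mult_le_mono1)
  then have "{i. i < s * v \<and> i div s = p} = {p * s..<Suc p * s}"
    by (auto simp: div_eq)
  then show ?thesis
    by simp
qed

definition singletons_and_subsets :: "nat \<Rightarrow> nat \<Rightarrow> (nat \<Rightarrow> nat set) \<Rightarrow> nat \<Rightarrow> nat set" where
  "singletons_and_subsets s v g b = (if b < s * v then {b div s} else g b)"

lemma card_blocks_through_singletons_and_subsets:
  assumes g: "bij_betw g {s * v..<m} {B. B \<subseteq> {..<v} \<and> B \<noteq> {}}"
    and "s * v \<le> m" "0 < s" "p < v" "q < v"
  shows "card {b. b < m \<and> p \<in> singletons_and_subsets s v g b \<and> q \<in> singletons_and_subsets s v g b} =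
    (if p = q then s + 2 ^ (v - 1) else 2 ^ (v - 2))"
proof -
  let ?singletons = "{b. b < s * v \<and> b div s = p \<and> q = p}"
  let ?subsets = "{b \<in> {s * v..<m}. {p, q} \<subseteq> g b}"
  have "{b. b < m \<and> p \<in> singletons_and_subsets s v g b \<and> q \<in> singletons_and_subsets s v g b} =
      ?singletons \<union> ?subsets"
    using assms(2) by (auto simp: singletons_and_subsets_def)
  moreover have "card (?singletons \<union> ?subsets) = card ?singletons + card ?subsets"
    by (rule card_Un_disjoint) auto
  ultimately have "card {b. b < m \<and> p \<in> singletons_and_subsets s v g b \<and> q \<in> singletons_and_subsets s v g b} =
      card ?singletons + card ?subsets"
    by simp
  also have "card ?singletons = (if p = q then s else 0)"
    using card_div_eq[OF assms(3,4)] by auto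
  also have "card ?subsets = 2 ^ (v - card {p, q})"
    using card_enumerated_supsets[OF g, of "{p, q}"] assms(4,5) by simp
  finally show ?thesis
    by (cases "p = q") (simp_all add: numeral_2_eq_2)
qed

text \<open>With \<open>\<beta> = 2\<^sup>v\<^sup>-\<^sup>2\<close> every point lies in \<open>2\<beta>\<close> nonempty subsets, and \<open>s = \<beta>(\<beta> - 2)\<close> extra
  singletons raise this to \<open>\<beta>\<^sup>2\<close>.\<close>

lemma clique_design_singletons_and_subsets:
  assumes v: "4 \<le> v" and s: "s = 2 ^ (v - 2) * (2 ^ (v - 2) - 2)"
    and g: "bij_betw g {s * v..<m} {B. B \<subseteq> {..<v} \<and> B \<noteq> {}}" and m: "s * v \<le> m"
  shows "clique_design v m (singletons_and_subsets s v g) (2 ^ (v - 2))"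
proof -
  define \<beta> :: nat where "\<beta> = 2 ^ (v - 2)"
  have "(2::nat) ^ 2 \<le> \<beta>"
    unfolding \<beta>_def using v by (intro power_increasing) auto
  then have \<beta>: "4 \<le> \<beta>"
    by simp
  then have s_ge_2: "2 \<le> s"
    using mult_le_mono[of 1 \<beta> 2 "\<beta> - 2"] by (simp add: s \<beta>_def)
  show ?thesis
  proof
    show "3 \<le> v" "2 \<le> (2::nat) ^ (v - 2)"
      using v \<beta> by (auto simp: \<beta>_def)
  next
    fix b
    assume "b < m"
    then show "singletons_and_subsets s v g b \<subseteq> {..<v}" "singletons_and_subsets s v g b \<noteq> {}"
      using bij_betw_apply[OF g, of b] s_ge_2
      by (auto simp: singletons_and_subsets_def div_less_iff_less_mult mult.commute)
  next
    fix p q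
    assume "p < v" "q < v"
    then have "card {b. b < m \<and> p \<in> singletons_and_subsets s v g b \<and> q \<in> singletons_and_subsets s v g b} =
        (if p = q then s + 2 ^ (v - 1) else 2 ^ (v - 2))"
      using card_blocks_through_singletons_and_subsets[OF g m] s_ge_2 by simp
    moreover have "2 ^ (v - 1) = 2 * \<beta>"
      using v by (simp add: \<beta>_def flip: power_Suc)
    moreover have "s + 2 * \<beta> = \<beta>\<^sup>2"
    proof -
      obtain c where "\<beta> = 2 + c"
        using \<beta> le_Suc_ex[of 2 \<beta>] by auto
      then show ?thesis
        by (simp add: s \<beta>_def[symmetric] power2_eq_square algebra_simps)
    qed
    ultimately show "card {b. b < m \<and> p \<in> singletons_and_subsets s v g b \<and> q \<in> singletons_and_subsets s v g b} =
        (if p = q then (2 ^ (v - 2))\<^sup>2 else 2 ^ (v - 2))"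
      by (simp only: flip: \<beta>_def)
  next
    have "1 < s * v"
      using mult_le_mono[OF s_ge_2, of 1 v] v by simp
    then have "0 < m" "1 < m"
      using m by linarith+
    moreover have "singletons_and_subsets s v g 0 = singletons_and_subsets s v g 1"
      using s_ge_2 \<open>1 < s * v\<close> v by (simp add: singletons_and_subsets_def)
    ultimately show "\<exists>b1<m. \<exists>b2<m. b1 \<noteq> b2 \<and> singletons_and_subsets s v g b1 = singletons_and_subsets s v g b2"
      using zero_neq_one by blast
  qed
qed

lemma exists_clique_design:
  assumes v: "4 \<le> v"
  shows "\<exists>m F. clique_design v m F (2 ^ (v - 2)) \<and> {1..v} \<subseteq> (\<lambda>b. card (F b)) ` {..<m}"
proof -
  define s :: nat where "s = 2 ^ (v - 2) * (2 ^ (v - 2) - 2)"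
  define Subsets where "Subsets = {B. B \<subseteq> {..<v} \<and> B \<noteq> {}}"
  define m where "m = s * v + card Subsets"
  obtain h where h: "bij_betw h {0..<card Subsets} Subsets"
    using ex_bij_betw_nat_finite[of Subsets] by (auto simp: Subsets_def)
  have "bij_betw (\<lambda>b. b - s * v) {s * v..<m} {0..<card Subsets}"
    by (rule bij_betw_byWitness[where f' = "\<lambda>i. i + s * v"]) (auto simp: m_def)
  then have g: "bij_betw (\<lambda>b. h (b - s * v)) {s * v..<m} Subsets"
    using bij_betw_trans[OF _ h] by (simp add: comp_def)
  define F where "F = singletons_and_subsets s v (\<lambda>b. h (b - s * v))"
  have "s * v \<le> m"
    by (simp add: m_def)
  then have "clique_design v m F (2 ^ (v - 2))"
    unfolding F_def by (rule clique_design_singletons_and_subsets[OF v s_def g[unfolded Subsets_def]])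
  moreover have "{1..v} \<subseteq> (\<lambda>b. card (F b)) ` {..<m}"
  proof
    fix j
    assume "j \<in> {1..v}"
    then have "0 \<in> {..<j}" "{..<j} \<subseteq> {..<v}"
      by auto
    then have "{..<j} \<in> Subsets"
      unfolding Subsets_def by blast
    then obtain b where b: "b \<in> {s * v..<m}" "h (b - s * v) = {..<j}"
      using bij_betw_imp_surj_on[OF g] by blast
    then have "card (F b) = j"
      by (simp add: F_def singletons_and_subsets_def)
    with b(1) show "j \<in> (\<lambda>b. card (F b)) ` {..<m}"
      by force
  qed
  ultimately show ?thesis
    by blast
qed

theorem theorem9:
  fixes t :: int
  shows "\<exists>(n::nat) (E :: nat \<Rightarrow> nat \<Rightarrow> bool).
           simple_graph n E \<and> connected_graph n E \<and> \<not> bipartite_graph n E \<and>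
           card (graph_eigenvalues n E) = 4 \<and>
           int (card (valencies n E)) \<ge> t"
proof -
  define v where "v = nat t + 4"
  obtain m F where design: "clique_design v m F (2 ^ (v - 2))"
    and sizes: "{1..v} \<subseteq> (\<lambda>b. card (F b)) ` {..<m}"
    using exists_clique_design[of v] by (auto simp: v_def)
  interpret clique_design v m F "2 ^ (v - 2)"
    by (rule design)
  have "v \<le> card (valencies n E)"
    using card_mono[OF _ subset_trans[OF sizes block_sizes_subset_valencies]]
    by (simp add: valencies_def)
  then show ?thesis
    using simple connected not_bipartite card_graph_eigenvalues unfolding v_def by force
qed

end
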